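(* Let $\ell\ge1$ and $V=\prod_{j=\ell,\dots,2,1}(c_1x^jy^jc_2)^2$. If $C$ is an accepting computation of $V$ and at some point during $C$ the queue contains two full $x$-blocks (respectively, two full $y$-blocks), then at some later point during $C$ the queue contains two full $y$-blocks (respectively, two full $x$-blocks).
   Context: Queue automaton: a configuration is written $Q\,\|\,x$ ($Q$ = queue contents, $x$ = remaining input); a step from $Q\,\|\,\sigma x$ ($\sigma$ a symbol) goes either to $Q\sigma\,\|\,x$ (push the input symbol) or, if $Q=\sigma Q'$, to $Q'\,\|\,x$ (the input symbol is matched against the leftmost queue symbol, which is popped; that queue symbol was pushed from an earlier input position and the two occurrences are said to be matched). An accepting computation of $w$ is a computation $\varepsilon\,\|\,w\vdash^*\varepsilon\,\|\,\varepsilon$ ($\varepsilon$ the empty string). Here $c_1,c_2,x,y$ are four distinct symbols and $V=v_\ell v_\ell v_{\ell-1}v_{\ell-1}\cdots v_1v_1$ with $v_j=c_1x^jy^jc_2$. Each displayed subword $x^j$ of $V$ is an $x$-block and each displayed $y^j$ a $y$-block. At a given point of a computation, the queue contains a full $x$-block (resp. $y$-block) if the entire block $x^j$ (resp. $y^j$) of $V$ has been pushed onto the queue, with none of its symbols matched when read, and none of its symbols has yet been popped. *)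

theory Defs
  imports Main
begin

datatype sym = C1 | C2 | X | Y

definition vfac :: "nat \<Rightarrow> sym list" where
  "vfac j = [C1] @ replicate j X @ replicate j Y @ [C2]"

definition Vword :: "nat \<Rightarrow> sym list" where
  "Vword l = concat (map (\<lambda>j. vfac j @ vfac j) (rev [1..<Suc l]))"

text \<open>Starting position (0-based) in Vword l of copy k (k = 0,1) of v_j.\<close>
definition vstart :: "nat \<Rightarrow> nat \<Rightarrow> nat \<Rightarrow> nat" where
  "vstart l j k = (\<Sum>j'\<in>{j<..l}. 2 * (2 * j' + 2)) + k * (2 * j + 2)"

definition xblocks :: "nat \<Rightarrow> nat set set" where
  "xblocks l = {{vstart l j k + 1 ..< vstart l j k + 1 + j} | j k. 1 \<le> j \<and> j \<le> l \<and> k < 2}"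

definition yblocks :: "nat \<Rightarrow> nat set set" where
  "yblocks l = {{vstart l j k + 1 + j ..< vstart l j k + 1 + 2 * j} | j k. 1 \<le> j \<and> j \<le> l \<and> k < 2}"

text \<open>Configurations: (queue, number of input symbols consumed).  The queue is
  recorded as the list of input positions whose symbols were pushed (leftmost
  = front); its symbol contents are map ((!) w) Q.\<close>
type_synonym config = "nat list \<times> nat"

definition qstep :: "'a list \<Rightarrow> config \<Rightarrow> config \<Rightarrow> bool" where
  "qstep w c c' \<longleftrightarrow> (case c of (Q, i) \<Rightarrow>
      i < length w \<and> snd c' = Suc i \<and>
      (fst c' = Q @ [i] \<or> (Q \<noteq> [] \<and> w ! hd Q = w ! i \<and> fst c' = tl Q)))"

definition accepting :: "'a list \<Rightarrow> config list \<Rightarrow> bool" where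
  "accepting w cs \<longleftrightarrow> cs \<noteq> [] \<and> hd cs = ([], 0) \<and> last cs = ([], length w) \<and>
     (\<forall>t. Suc t < length cs \<longrightarrow> qstep w (cs ! t) (cs ! Suc t))"

definition two_full :: "nat set set \<Rightarrow> config \<Rightarrow> bool" where
  "two_full Bs c \<longleftrightarrow> (\<exists>B1\<in>Bs. \<exists>B2\<in>Bs. B1 \<noteq> B2 \<and> B1 \<subseteq> set (fst c) \<and> B2 \<subseteq> set (fst c))"

end

theory Submission
  imports Defs
begin

text \<open>Let \<open>\<sigma>\<^sup>j\<close> and \<open>\<sigma>\<^sup>j\<^sup>'\<close> be the two full blocks, the first one earlier in \<open>V\<close>, so \<open>j' \<le> j\<close>.
  All input read afterwards lies beyond the second block, so every block in it is shorter than
  \<open>j\<close>. The queue being first-in first-out, the symbols of the first block are matched, in order,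
  by \<open>j\<close> occurrences of \<open>\<sigma>\<close> that cannot all lie in one block; hence a complete block of the
  other letter \<open>\<tau>\<close> is read in between. Meanwhile the queue head lies in the first block, so
  these \<open>\<tau>\<close>'s cannot be matched and are pushed. The matching has now passed at least two
  factors beyond the second block, so the blocks that follow are shorter than \<open>j'\<close>, and the
  same argument gives a second pushed \<open>\<tau>\<close>-block while the second \<open>\<sigma>\<close>-block is matched.
  Both \<open>\<tau>\<close>-blocks were pushed after the second \<open>\<sigma>\<close>-block, so both are still in the queue
  when its last symbol is popped.\<close>

lemma length_vfac [simp]: "length (vfac j) = 2 * j + 2"
  by (simp add: vfac_def)

lemma nth_vfac:
  "q < 2 * j + 2 \<Longrightarrow>
    vfac j ! q = (if q = 0 then C1 else if q \<le> j then X else if q \<le> 2 * j then Y else C2)"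
  by (auto simp: vfac_def nth_append nth_Cons' nth_replicate)

lemma Vword_0: "Vword 0 = []"
  by (simp add: Vword_def)

lemma Vword_Suc: "Vword (Suc l) = vfac (Suc l) @ vfac (Suc l) @ Vword l"
  by (simp add: Vword_def)

lemma vstart_Suc_self: "vstart (Suc l) (Suc l) k = k * (2 * Suc l + 2)"
  by (simp add: vstart_def)

lemma vstart_Suc: "j \<le> l \<Longrightarrow> vstart (Suc l) j k = vstart l j k + 2 * (2 * Suc l + 2)"
proof -
  assume "j \<le> l"
  then have "{j<..Suc l} = insert (Suc l) {j<..l}" by auto
  then show ?thesis by (simp add: vstart_def)
qed

definition is_factor :: "nat \<Rightarrow> nat \<Rightarrow> nat \<Rightarrow> bool" where
  "is_factor l j k \<longleftrightarrow> 1 \<le> j \<and> j \<le> l \<and> k < 2"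

text \<open>Copy \<open>k\<close> of \<open>v\<^sub>j\<close> is the \<open>factor_rank l j k\<close>-th factor of \<open>Vword l\<close>, counting from 0.\<close>
definition factor_rank :: "nat \<Rightarrow> nat \<Rightarrow> nat \<Rightarrow> nat" where
  "factor_rank l j k = 2 * (l - j) + k"

lemma nth_Vword_vstart:
  assumes "is_factor l j k" "q < 2 * j + 2"
  shows "vstart l j k + q < length (Vword l) \<and> Vword l ! (vstart l j k + q) = vfac j ! q"
  using assms
proof (induction l)
  case 0
  then show ?case by (auto simp: is_factor_def)
next
  case (Suc l)
  show ?case
  proof (cases "j = Suc l")
    case True
    then have "k = 0 \<or> k = 1" using Suc.prems by (auto simp: is_factor_def)
    then show ?thesis
    proof
      assume "k = 0"
      then show ?thesis using Suc.prems True vstart_Suc_self[of l k]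
        by (auto simp: Vword_Suc nth_append)
    next
      assume "k = 1"
      then have "vstart (Suc l) j k + q = length (vfac (Suc l)) + q"
        using vstart_Suc_self[of l k] True by simp
      then show ?thesis using Suc.prems True
        by (simp only: Vword_Suc nth_append_length_plus) (simp add: nth_append)
    qed
  next
    case False
    then have "is_factor l j k" "j \<le> l" using Suc.prems by (auto simp: is_factor_def)
    with Suc.IH[OF this(1) Suc.prems(2)] show ?thesis
      by (simp add: vstart_Suc Vword_Suc nth_append)
  qed
qed

lemma Vword_position_cases:
  assumes "p < length (Vword l)"
  obtains j k q where "is_factor l j k" "q < 2 * j + 2" "p = vstart l j k + q"
proof -
  have "\<exists>j k q. is_factor l j k \<and> q < 2 * j + 2 \<and> p = vstart l j k + q"
    using assms
  proof (induction l arbitrary: p)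
    case 0
    then show ?case by (simp add: Vword_0)
  next
    case (Suc l)
    consider "p < 2 * Suc l + 2" | "2 * Suc l + 2 \<le> p" "p < 2 * (2 * Suc l + 2)"
      | "2 * (2 * Suc l + 2) \<le> p" by linarith
    then show ?case
    proof cases
      case 1
      then show ?thesis using vstart_Suc_self[of l 0]
        by (intro exI[of _ "Suc l"] exI[of _ 0] exI[of _ p]) (simp add: is_factor_def)
    next
      case 2
      then show ?thesis using vstart_Suc_self[of l 1]
        by (intro exI[of _ "Suc l"] exI[of _ 1] exI[of _ "p - (2 * Suc l + 2)"])
          (auto simp: is_factor_def)
    next
      case 3
      then have "p - 2 * (2 * Suc l + 2) < length (Vword l)"
        using Suc.prems by (simp add: Vword_Suc)
      from Suc.IH[OF this] obtain j k q where
        "is_factor l j k" "q < 2 * j + 2" "p - 2 * (2 * Suc l + 2) = vstart l j k + q"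
        by blast
      with 3 show ?thesis
        by (intro exI[of _ j] exI[of _ k] exI[of _ q])
          (auto simp: is_factor_def vstart_Suc)
    qed
  qed
  then show thesis using that by blast
qed

lemma factor_ends_before_if_rank_less:
  assumes "is_factor l j k" "is_factor l j' k'" "factor_rank l j k < factor_rank l j' k'"
  shows "vstart l j k + 2 * j + 2 \<le> vstart l j' k'"
proof (cases "j' = j")
  case True
  then have "k = 0" "k' = 1" using assms by (auto simp: factor_rank_def is_factor_def)
  then show ?thesis using True by (simp add: vstart_def)
next
  case False
  then have "j' < j" using assms by (auto simp: factor_rank_def is_factor_def)
  let ?f = "\<lambda>i. 2 * (2 * i + 2)"
  have "insert j {j<..l} \<subseteq> {j'<..l}" using \<open>j' < j\<close> assms by (auto simp: is_factor_def)
  then have "sum ?f (insert j {j<..l}) \<le> sum ?f {j'<..l}" by (intro sum_mono2) auto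
  then have "?f j + sum ?f {j<..l} \<le> sum ?f {j'<..l}" by simp
  moreover have "k * (2 * j + 2) \<le> 2 * j + 2" using assms(1) by (cases k) (auto simp: is_factor_def)
  ultimately show ?thesis unfolding vstart_def by simp
qed

lemma factor_rank_inj:
  assumes "is_factor l j k" "is_factor l j' k'" "factor_rank l j k = factor_rank l j' k'"
  shows "j = j'" "k = k'"
proof -
  have k: "k < 2" "k' < 2" "j \<le> l" "j' \<le> l" using assms(1,2) by (auto simp: is_factor_def)
  from assms(3) have e: "2 * (l - j) + k = 2 * (l - j') + k'" by (simp add: factor_rank_def)
  then have "(2 * (l - j) + k) mod 2 = (2 * (l - j') + k') mod 2" by simp
  then show "k = k'" using k by simp
  with e have "l - j = l - j'" by simp
  with k show "j = j'" by linarith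
qed

lemma factor_smaller_if_rank_far:
  assumes "is_factor l j k" "is_factor l j' k'" "factor_rank l j k + 2 \<le> factor_rank l j' k'"
  shows "j' < j"
  using assms by (auto simp: factor_rank_def is_factor_def)

definition letter :: "bool \<Rightarrow> sym" where
  "letter b = (if b then Y else X)"

definition block :: "nat \<Rightarrow> nat \<Rightarrow> nat \<Rightarrow> bool \<Rightarrow> nat set" where
  "block l j k b =
    {vstart l j k + 1 + (if b then j else 0) ..< vstart l j k + 1 + (if b then j else 0) + j}"

definition blocks :: "nat \<Rightarrow> bool \<Rightarrow> nat set set" where
  "blocks l b = {block l j k b | j k. is_factor l j k}"

lemma xblocks_eq_blocks: "xblocks l = blocks l False"
  by (simp add: xblocks_def blocks_def block_def is_factor_def)

lemma yblocks_eq_blocks: "yblocks l = blocks l True"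
  by (simp add: yblocks_def blocks_def block_def is_factor_def mult_2 add.assoc)

lemma blocks_nonempty: "B \<in> blocks l b \<Longrightarrow> B \<noteq> {}"
  by (auto simp: blocks_def block_def is_factor_def)

lemma block_eq_interval:
  assumes "is_factor l j k"
  obtains a where "block l j k b = {a..a + (j - 1)}"
proof (rule that)
  let ?a = "vstart l j k + 1 + (if b then j else 0)"
  show "block l j k b = {?a..?a + (j - 1)}"
    using assms by (auto simp: block_def is_factor_def)
qed

lemma block_bounds: "m \<in> block l j k b \<Longrightarrow> vstart l j k < m \<and> m \<le> vstart l j k + 2 * j"
  by (auto simp: block_def split: if_splits)

lemma nth_vfac_eq_letter_iff:
  assumes "q < 2 * j + 2"
  shows "vfac j ! q = letter b \<longleftrightarrow> vstart l j k + q \<in> block l j k b"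
  using assms by (cases b) (auto simp: nth_vfac letter_def block_def)

lemma nth_Vword_block:
  assumes "is_factor l j k" "m \<in> block l j k b"
  shows "m < length (Vword l)" "Vword l ! m = letter b"
proof -
  define q where "q = m - vstart l j k"
  have "m = vstart l j k + q" "q < 2 * j + 2"
    using block_bounds[OF assms(2)] by (auto simp: q_def)
  then show "m < length (Vword l)" "Vword l ! m = letter b"
    using nth_Vword_vstart[OF assms(1)] nth_vfac_eq_letter_iff assms(2) by metis+
qed

lemma nth_Vword_blocks: "B \<in> blocks l b \<Longrightarrow> r \<in> B \<Longrightarrow> Vword l ! r = letter b"
  using nth_Vword_block by (auto simp: blocks_def)

lemma letter_Not_neq: "letter (\<not> b) \<noteq> letter b"
  by (cases b) (simp_all add: letter_def)

lemma block_of_letter: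
  assumes "m < length (Vword l)" "Vword l ! m = letter b"
  obtains j k where "is_factor l j k" "m \<in> block l j k b"
proof -
  obtain j k q where "is_factor l j k" "q < 2 * j + 2" "m = vstart l j k + q"
    using Vword_position_cases[OF assms(1)] .
  with assms(2) nth_Vword_vstart nth_vfac_eq_letter_iff that show thesis by metis
qed

lemma factor_rank_le_if_block_le:
  assumes "is_factor l j k" "is_factor l j' k'"
    and "m \<in> block l j k b" "m' \<in> block l j' k' b'" "m \<le> m'"
  shows "factor_rank l j k \<le> factor_rank l j' k'"
proof (rule ccontr)
  assume "\<not> ?thesis"
  then have "vstart l j' k' + 2 * j' + 2 \<le> vstart l j k"
    using factor_ends_before_if_rank_less assms(1,2) by simp
  then show False using assms(5) block_bounds[OF assms(3)] block_bounds[OF assms(4)] by linarith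
qed

lemma other_block_between:
  assumes "is_factor l p r" "is_factor l p' r'"
    and "m \<in> block l p r b" "m' \<in> block l p' r' b" "p \<le> s" "m + s \<le> m'"
  shows "factor_rank l p r < factor_rank l p' r'" "\<exists>B\<in>blocks l (\<not> b). B \<subseteq> {m<..<m'}"
proof -
  have "(p, r) \<noteq> (p', r')"
    using assms(3-6) by (auto simp: block_def)
  moreover have "factor_rank l p r \<le> factor_rank l p' r'"
    using factor_rank_le_if_block_le[OF assms(1-4)] assms(6) by simp
  ultimately show rank: "factor_rank l p r < factor_rank l p' r'"
    using factor_rank_inj[OF assms(1,2)] by fastforce
  have order: "vstart l p r + 2 * p + 2 \<le> vstart l p' r'"
    using factor_ends_before_if_rank_less[OF assms(1,2) rank] .
  \<comment> \<open>an \<open>X\<close> position is followed by the \<open>Y\<close>-block of its factor, a \<open>Y\<close> position is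
    preceded by the \<open>X\<close>-block of its factor\<close>
  show "\<exists>B\<in>blocks l (\<not> b). B \<subseteq> {m<..<m'}"
  proof (cases b)
    case True
    then have "block l p' r' (\<not> b) \<subseteq> {m<..<m'}"
      using order block_bounds[OF assms(3)] assms(4) by (auto simp: block_def)
    then show ?thesis using assms(2) by (auto simp: blocks_def)
  next
    case False
    then have "block l p r (\<not> b) \<subseteq> {m<..<m'}"
      using order block_bounds[OF assms(4)] assms(3) by (auto simp: block_def)
    then show ?thesis using assms(1) by (auto simp: blocks_def)
  qed
qed

text \<open>In the application, \<open>m\<^sub>1, m\<^sub>2\<close> (resp. \<open>m\<^sub>3, m\<^sub>4\<close>) are the times at which the first
  and the last symbol of the earlier (resp. later) full block are matched.\<close>
lemma two_other_blocks_between_runs: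
  assumes "is_factor l j k" "is_factor l j' k'" "factor_rank l j k < factor_rank l j' k'"
    and "block l j' k' b \<subseteq> {..<m\<^sub>1}"
    and "m\<^sub>1 + (j - 1) \<le> m\<^sub>2" "m\<^sub>2 < m\<^sub>3" "m\<^sub>3 + (j' - 1) \<le> m\<^sub>4" "m\<^sub>4 < length (Vword l)"
    and "\<forall>m\<in>{m\<^sub>1, m\<^sub>2, m\<^sub>3, m\<^sub>4}. Vword l ! m = letter b"
  shows "\<exists>B\<^sub>1\<in>blocks l (\<not> b). \<exists>B\<^sub>2\<in>blocks l (\<not> b).
    B\<^sub>1 \<noteq> B\<^sub>2 \<and> B\<^sub>1 \<subseteq> {m\<^sub>1<..<m\<^sub>2} \<and> B\<^sub>2 \<subseteq> {m\<^sub>3<..<m\<^sub>4}"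
proof -
  have "m\<^sub>1 < length (Vword l)" "m\<^sub>2 < length (Vword l)" "m\<^sub>3 < length (Vword l)"
    using assms(5-8) by linarith+
  then obtain p\<^sub>1 r\<^sub>1 p\<^sub>2 r\<^sub>2 p\<^sub>3 r\<^sub>3 p\<^sub>4 r\<^sub>4 where
    P\<^sub>1: "is_factor l p\<^sub>1 r\<^sub>1" "m\<^sub>1 \<in> block l p\<^sub>1 r\<^sub>1 b" and
    P\<^sub>2: "is_factor l p\<^sub>2 r\<^sub>2" "m\<^sub>2 \<in> block l p\<^sub>2 r\<^sub>2 b" and
    P\<^sub>3: "is_factor l p\<^sub>3 r\<^sub>3" "m\<^sub>3 \<in> block l p\<^sub>3 r\<^sub>3 b" and
    P\<^sub>4: "is_factor l p\<^sub>4 r\<^sub>4" "m\<^sub>4 \<in> block l p\<^sub>4 r\<^sub>4 b"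
    using block_of_letter assms(8,9) by (metis insert_iff)
  obtain e where e: "e \<in> block l j' k' b"
    using blocks_nonempty[of "block l j' k' b" l b] assms(2) by (auto simp: blocks_def)
  have "factor_rank l j' k' \<le> factor_rank l p\<^sub>1 r\<^sub>1"
    using factor_rank_le_if_block_le[OF assms(2) P\<^sub>1(1) e P\<^sub>1(2)] e assms(4) by auto
  moreover have "factor_rank l j' k' \<noteq> factor_rank l p\<^sub>1 r\<^sub>1"
    using factor_rank_inj[OF assms(2) P\<^sub>1(1)] P\<^sub>1(2) assms(4) by auto
  ultimately have after_B: "factor_rank l j' k' < factor_rank l p\<^sub>1 r\<^sub>1" by simp
  then have "p\<^sub>1 \<le> j - 1"
    using factor_smaller_if_rank_far[OF assms(1) P\<^sub>1(1)] assms(3) by simp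
  note first_run = other_block_between[OF P\<^sub>1(1) P\<^sub>2(1) P\<^sub>1(2) P\<^sub>2(2) this assms(5)]
  obtain B\<^sub>1 where B\<^sub>1: "B\<^sub>1 \<in> blocks l (\<not> b)" "B\<^sub>1 \<subseteq> {m\<^sub>1<..<m\<^sub>2}"
    using first_run(2) by blast
  have "factor_rank l p\<^sub>2 r\<^sub>2 \<le> factor_rank l p\<^sub>3 r\<^sub>3"
    using factor_rank_le_if_block_le[OF P\<^sub>2(1) P\<^sub>3(1) P\<^sub>2(2) P\<^sub>3(2)] assms(6) by simp
  with first_run(1) have "p\<^sub>3 \<le> j' - 1"
    using factor_smaller_if_rank_far[OF assms(2) P\<^sub>3(1)] after_B by simp
  then obtain B\<^sub>2 where B\<^sub>2: "B\<^sub>2 \<in> blocks l (\<not> b)" "B\<^sub>2 \<subseteq> {m\<^sub>3<..<m\<^sub>4}"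
    using other_block_between(2)[OF P\<^sub>3(1) P\<^sub>4(1) P\<^sub>3(2) P\<^sub>4(2) _ assms(7)] by blast
  have "B\<^sub>1 \<noteq> B\<^sub>2"
    using blocks_nonempty[OF B\<^sub>1(1)] B\<^sub>1(2) B\<^sub>2(2) assms(6) by fastforce
  with B\<^sub>1 B\<^sub>2 show ?thesis by blast
qed

locale accepting_run =
  fixes w :: "'a list" and cs :: "config list"
  assumes accepting: "accepting w cs"
begin

definition queue :: "nat \<Rightarrow> nat list" where
  "queue i = fst (cs ! i)"

lemma snd_nth_cs: "i < length cs \<Longrightarrow> snd (cs ! i) = i"
proof (induction i)
  case 0
  then show ?case using accepting by (simp add: accepting_def hd_conv_nth)
next
  case (Suc i)
  then have "qstep w (cs ! i) (cs ! Suc i)" using accepting by (simp add: accepting_def)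
  with Suc show ?case by (auto simp: qstep_def split: prod.splits)
qed

lemma length_cs: "length cs = Suc (length w)"
proof -
  have "cs \<noteq> []" "snd (last cs) = length w" using accepting by (auto simp: accepting_def)
  with snd_nth_cs[of "length cs - 1"] have "length cs - 1 = length w" by (simp add: last_conv_nth)
  with \<open>cs \<noteq> []\<close> show ?thesis by (cases cs) auto
qed

lemma nth_cs: "i \<le> length w \<Longrightarrow> cs ! i = (queue i, i)"
  using snd_nth_cs[of i] length_cs by (simp add: queue_def prod_eq_iff)

lemma queue_0: "queue 0 = []"
  using accepting by (auto simp: accepting_def hd_conv_nth queue_def)

lemma queue_length: "queue (length w) = []"
  using accepting length_cs by (auto simp: accepting_def last_conv_nth queue_def)

lemma queue_Suc:
  assumes "i < length w"
  shows "queue (Suc i) = queue i @ [i] \<or>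
    (queue i \<noteq> [] \<and> w ! hd (queue i) = w ! i \<and> queue (Suc i) = tl (queue i))"
proof -
  have "qstep w (cs ! i) (cs ! Suc i)" using accepting assms length_cs by (simp add: accepting_def)
  then show ?thesis using nth_cs[of i] nth_cs[of "Suc i"] assms by (simp add: qstep_def)
qed

lemma queue_sorted: "i \<le> length w \<Longrightarrow> sorted_wrt (<) (queue i) \<and> (\<forall>p\<in>set (queue i). p < i)"
proof (induction i)
  case 0
  then show ?case by (simp add: queue_0)
next
  case (Suc i)
  then have IH: "sorted_wrt (<) (queue i)" "\<forall>p\<in>set (queue i). p < i" by auto
  from Suc.prems have "i < length w" by simp
  from queue_Suc[OF this] show ?case
  proof
    assume "queue (Suc i) = queue i @ [i]"
    with IH show ?thesis by (auto simp: sorted_wrt_append)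
  next
    assume "queue i \<noteq> [] \<and> w ! hd (queue i) = w ! i \<and> queue (Suc i) = tl (queue i)"
    with IH show ?thesis by (cases "queue i") auto
  qed
qed

lemma in_queue_less: "p \<in> set (queue i) \<Longrightarrow> i \<le> length w \<Longrightarrow> p < i"
  using queue_sorted by blast

lemma hd_queue_le: "p \<in> set (queue i) \<Longrightarrow> i \<le> length w \<Longrightarrow> hd (queue i) \<le> p"
  using queue_sorted[of i] by (cases "queue i") auto

text \<open>Position \<open>p\<close> can be pushed only at time \<open>p\<close>.\<close>
lemma not_in_queue_later:
  assumes "p \<notin> set (queue s)" "p < s" "s \<le> s'" "s' \<le> length w"
  shows "p \<notin> set (queue s')"
  using assms(3,4)
proof (induction s' rule: dec_induct)
  case base
  then show ?case using assms(1) by simp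
next
  case (step m)
  with queue_Suc[of m] assms(2) show ?case by (cases "queue m") auto
qed

lemma in_queue_earlier:
  "p \<in> set (queue s) \<Longrightarrow> s \<le> length w \<Longrightarrow> p < s' \<Longrightarrow> s' \<le> s \<Longrightarrow> p \<in> set (queue s')"
  using not_in_queue_later by blast

definition matched :: "nat \<Rightarrow> nat \<Rightarrow> bool" where
  "matched p m \<longleftrightarrow> m < length w \<and> queue m \<noteq> [] \<and> hd (queue m) = p \<and>
    queue (Suc m) = tl (queue m) \<and> w ! m = w ! p"

lemma matched_before_leaving:
  assumes "p \<in> set (queue t)" "p \<notin> set (queue s)" "t \<le> s" "s \<le> length w"
  shows "\<exists>m. t \<le> m \<and> m < s \<and> matched p m"
  using assms(3,2,4)
proof (induction s rule: dec_induct)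
  case base
  then show ?case using assms(1) by simp
next
  case (step s)
  show ?case
  proof (cases "p \<in> set (queue s)")
    case True
    have "queue (Suc s) \<noteq> queue s @ [s]" using True step.prems(1) by auto
    with queue_Suc[of s] step.prems(2) have "queue s \<noteq> []" "w ! hd (queue s) = w ! s"
      "queue (Suc s) = tl (queue s)" by auto
    moreover have "hd (queue s) = p"
      using True step.prems(1) \<open>queue s \<noteq> []\<close> \<open>queue (Suc s) = tl (queue s)\<close>
      by (cases "queue s") auto
    ultimately have "matched p s" using step.prems(2) by (simp add: matched_def)
    with step.hyps show ?thesis by auto
  next
    case False
    with step.IH step.prems(2) show ?thesis by (auto intro: less_SucI)
  qed
qed

lemma matched_after:
  assumes "matched p m" "p \<in> set (queue t)" "t \<le> length w"
  shows "t \<le> m"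
proof (rule ccontr)
  assume "\<not> t \<le> m"
  have "p \<notin> set (queue (Suc m))"
    using assms(1) queue_sorted[of m] by (cases "queue m") (auto simp: matched_def)
  moreover have "p < Suc m" using assms(1) in_queue_less[of p m] by (auto simp: matched_def)
  ultimately show False
    using not_in_queue_later[of p "Suc m" t] assms(2,3) \<open>\<not> t \<le> m\<close> by simp
qed

definition match_time :: "nat \<Rightarrow> nat" where
  "match_time p = (SOME m. matched p m)"

lemma match_time:
  assumes "p \<in> set (queue t)" "t \<le> length w"
  shows "matched p (match_time p)" "t \<le> match_time p"
proof -
  obtain m where "matched p m"
    using matched_before_leaving[OF assms(1) _ assms(2)] queue_length by auto
  then show "matched p (match_time p)" unfolding match_time_def by (rule someI)
  then show "t \<le> match_time p" using matched_after assms by blast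
qed

lemma in_queue_at_match_time:
  "p \<in> set (queue t) \<Longrightarrow> t \<le> length w \<Longrightarrow> p \<in> set (queue (match_time p))"
  using match_time(1)[of p t] hd_in_set unfolding matched_def by metis

lemma match_time_mono:
  assumes "p \<in> set (queue t)" "q \<in> set (queue t)" "t \<le> length w" "p < q"
  shows "match_time p < match_time q"
proof (rule ccontr)
  assume "\<not> ?thesis"
  then have "p \<in> set (queue (match_time q))"
    using in_queue_earlier[OF in_queue_at_match_time[OF assms(1,3)]] match_time[OF assms(1,3)]
      match_time[OF assms(2,3)] in_queue_less[OF assms(1,3)]
    by (simp add: matched_def)
  then have "q \<le> p"
    using hd_queue_le match_time[OF assms(2,3)] by (fastforce simp: matched_def)
  with assms(4) show False by simp
qed

lemma match_time_run:
  assumes "{a..a + d} \<subseteq> set (queue t)" "t \<le> length w"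
  shows "match_time a + d \<le> match_time (a + d)"
  using assms(1)
proof (induction d)
  case 0
  then show ?case by simp
next
  case (Suc d)
  then have "{a..a + d} \<subseteq> set (queue t)" "a + d \<in> set (queue t)" "a + Suc d \<in> set (queue t)"
    by auto
  then have "match_time a + d \<le> match_time (a + d)" "match_time (a + d) < match_time (a + Suc d)"
    using Suc.IH match_time_mono assms(2) by simp_all
  then show ?case by simp
qed

text \<open>While a run of equal letters is being matched, the queue head lies inside the run, so a
  different input letter cannot be matched and has to be pushed.\<close>
lemma pushed_while_matching_run:
  assumes "{a..e} \<subseteq> set (queue t)" "\<forall>i\<in>{a..e}. w ! i = \<sigma>" "a \<le> e" "t \<le> length w"
    and "match_time a < r" "r < match_time e" "w ! r \<noteq> \<sigma>"
  shows "queue (Suc r) = queue r @ [r]"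
proof (rule ccontr)
  assume "\<not> ?thesis"
  have a: "a \<in> set (queue t)" and e: "e \<in> set (queue t)" using assms(1,3) by auto
  have r: "r < length w" using assms(6) match_time(1)[OF e assms(4)] by (simp add: matched_def)
  with \<open>\<not> ?thesis\<close> queue_Suc[OF r] have pop: "queue r \<noteq> []" "w ! hd (queue r) = w ! r" by auto
  have "t \<le> match_time a" using match_time(2)[OF a assms(4)] .
  have "e \<in> set (queue r)"
    using in_queue_earlier[OF in_queue_at_match_time[OF e assms(4)]] in_queue_less[OF e assms(4)]
      assms(5,6) \<open>t \<le> match_time a\<close> match_time(1)[OF e assms(4)]
    by (simp add: matched_def)
  then have "hd (queue r) \<le> e" using hd_queue_le r by simp
  moreover have "a \<le> hd (queue r)"
  proof (rule ccontr)
    assume "\<not> a \<le> hd (queue r)"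
    moreover have "a < t" using in_queue_less[OF a assms(4)] .
    ultimately have "hd (queue r) \<in> set (queue (match_time a))"
      using in_queue_earlier[of "hd (queue r)" r "match_time a"] pop(1) r assms(5)
        \<open>t \<le> match_time a\<close> by simp
    then have "a \<le> hd (queue r)"
      using hd_queue_le match_time(1)[OF a assms(4)] by (fastforce simp: matched_def)
    with \<open>\<not> a \<le> hd (queue r)\<close> show False by simp
  qed
  ultimately show False using assms(2,7) pop(2) by simp
qed

lemma pushed_stays_in_queue:
  assumes "queue (Suc r) = queue r @ [r]" "p \<in> set (queue s)" "p < r" "r < s" "s \<le> length w"
  shows "r \<in> set (queue s)"
proof (rule ccontr)
  assume "r \<notin> set (queue s)"
  then obtain m where m: "Suc r \<le> m" "m < s" "matched r m"
    using matched_before_leaving[of r "Suc r" s] assms by auto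
  then have "p \<in> set (queue m)" using in_queue_earlier assms(2-5) by simp
  then have "r \<le> p" using hd_queue_le m assms(5) by (fastforce simp: matched_def)
  with assms(3) show False by simp
qed

lemma nth_match_time: "p \<in> set (queue t) \<Longrightarrow> t \<le> length w \<Longrightarrow> w ! match_time p = w ! p"
  using match_time(1) by (simp add: matched_def)

lemma match_times_of_queued_runs:
  assumes "{a..e} \<subseteq> set (queue t)" "{a'..e'} \<subseteq> set (queue t)" "a \<le> e" "e < a'" "a' \<le> e'"
    and "t \<le> length w"
  shows "t \<le> match_time a" "match_time a + (e - a) \<le> match_time e"
    "match_time e < match_time a'" "match_time a' + (e' - a') \<le> match_time e'"
    "match_time e' < length w"
proof -
  have ends: "a \<in> set (queue t)" "e \<in> set (queue t)" "a' \<in> set (queue t)" "e' \<in> set (queue t)"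
    using assms(1-5) by auto
  show "t \<le> match_time a" using match_time(2)[OF ends(1) assms(6)] .
  show "match_time a + (e - a) \<le> match_time e" "match_time a' + (e' - a') \<le> match_time e'"
    using match_time_run[of a "e - a" t] match_time_run[of a' "e' - a'" t] assms by simp_all
  show "match_time e < match_time a'" using match_time_mono[OF ends(2,3) assms(6,4)] .
  show "match_time e' < length w"
    using match_time(1)[OF ends(4) assms(6)] by (simp add: matched_def)
qed

lemma pushed_while_matching_run_stays:
  assumes "{a..e} \<subseteq> set (queue t)" "\<forall>i\<in>{a..e}. w ! i = \<sigma>" "a \<le> e" "t \<le> length w"
    and "B \<subseteq> {match_time a<..<match_time e}" "\<forall>r\<in>B. w ! r \<noteq> \<sigma>"
    and "p \<in> set (queue s)" "p < t" "match_time e \<le> s" "s \<le> length w"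
  shows "B \<subseteq> set (queue s)"
proof
  fix r assume "r \<in> B"
  with assms(5,6) have r: "match_time a < r" "r < match_time e" "w ! r \<noteq> \<sigma>" by auto
  moreover have "t \<le> match_time a" using match_time(2)[of a t] assms(1,3,4) by auto
  ultimately show "r \<in> set (queue s)"
    using pushed_stays_in_queue[OF pushed_while_matching_run[OF assms(1-4) r] assms(7)] assms(8-10)
    by simp
qed

end

lemma two_full_ordered_blocks_imp_two_full_other:
  assumes "accepting (Vword l) cs" "t < length cs"
    and "is_factor l j k" "is_factor l j' k'" "factor_rank l j k < factor_rank l j' k'"
    and "block l j k b \<subseteq> set (fst (cs ! t))" "block l j' k' b \<subseteq> set (fst (cs ! t))"
  shows "\<exists>t'. t < t' \<and> t' < length cs \<and> two_full (blocks l (\<not> b)) (cs ! t')"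
proof -
  interpret accepting_run "Vword l" cs by unfold_locales (rule assms(1))
  have t: "t \<le> length (Vword l)" using assms(2) length_cs by simp
  obtain a a' where "block l j k b = {a..a + (j - 1)}" "block l j' k' b = {a'..a' + (j' - 1)}"
    using block_eq_interval assms(3,4) by metis
  moreover define e e' where "e = a + (j - 1)" "e' = a' + (j' - 1)"
  ultimately have run: "block l j k b = {a..e}" "block l j' k' b = {a'..e'}" "a \<le> e" "a' \<le> e'"
    by simp_all
  then have in_queue: "{a..e} \<subseteq> set (queue t)" "{a'..e'} \<subseteq> set (queue t)"
    using assms(6,7) by (simp_all add: queue_def)
  have letters: "\<forall>i\<in>{a..e}. Vword l ! i = letter b" "\<forall>i\<in>{a'..e'}. Vword l ! i = letter b"
    using nth_Vword_block assms(3,4) run(1,2) by blast+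
  have "e < a'"
    using factor_ends_before_if_rank_less[OF assms(3-5)] block_bounds[of e l j k b]
      block_bounds[of a' l j' k' b] run by auto
  note times = match_times_of_queued_runs[OF in_queue run(3) this run(4) t]
  define m\<^sub>1 m\<^sub>2 m\<^sub>3 m\<^sub>4 where m:
    "m\<^sub>1 = match_time a" "m\<^sub>2 = match_time e" "m\<^sub>3 = match_time a'" "m\<^sub>4 = match_time e'"
  have runs: "m\<^sub>1 + (j - 1) \<le> m\<^sub>2" "m\<^sub>2 < m\<^sub>3" "m\<^sub>3 + (j' - 1) \<le> m\<^sub>4" "m\<^sub>4 < length (Vword l)"
    using times by (simp_all add: m \<open>e = _\<close> \<open>e' = _\<close>)
  have "\<forall>m\<in>{m\<^sub>1, m\<^sub>2, m\<^sub>3, m\<^sub>4}. Vword l ! m = letter b"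
    using nth_match_time[of _ t] in_queue letters run(3,4) t by (auto simp: m subset_eq)
  moreover have "block l j' k' b \<subseteq> {..<m\<^sub>1}"
    using assms(7) in_queue_less times(1) t by (fastforce simp: queue_def m)
  ultimately obtain B\<^sub>1 B\<^sub>2 where B: "B\<^sub>1 \<in> blocks l (\<not> b)" "B\<^sub>2 \<in> blocks l (\<not> b)" "B\<^sub>1 \<noteq> B\<^sub>2"
    "B\<^sub>1 \<subseteq> {m\<^sub>1<..<m\<^sub>2}" "B\<^sub>2 \<subseteq> {m\<^sub>3<..<m\<^sub>4}"
    using two_other_blocks_between_runs[OF assms(3-5) _ runs] by blast
  have "e' \<in> set (queue m\<^sub>4)" "e' < t"
    using in_queue_at_match_time in_queue_less in_queue(2) run(4) t by (auto simp: m)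
  note stays = pushed_while_matching_run_stays[OF _ _ _ t _ _ this _ less_imp_le[OF runs(4)]]
  have other_letter: "\<forall>r\<in>B. Vword l ! r \<noteq> letter b" if "B \<in> blocks l (\<not> b)" for B
    using nth_Vword_blocks[OF that] letter_Not_neq by metis
  have "B\<^sub>1 \<subseteq> set (queue m\<^sub>4)" "B\<^sub>2 \<subseteq> set (queue m\<^sub>4)"
    using stays[OF in_queue(1) letters(1) run(3)] stays[OF in_queue(2) letters(2) run(4)]
      other_letter B(1,2,4,5) times(3,4) by (auto simp: m)
  moreover have "cs ! m\<^sub>4 = (queue m\<^sub>4, m\<^sub>4)" "t < m\<^sub>4" "m\<^sub>4 < length cs"
    using nth_cs times length_cs by (auto simp: m)
  ultimately show ?thesis using B(1-3) unfolding two_full_def by force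
qed

lemma two_full_blocks_imp_two_full_other:
  assumes "accepting (Vword l) cs" "t < length cs" "two_full (blocks l b) (cs ! t)"
  shows "\<exists>t'. t < t' \<and> t' < length cs \<and> two_full (blocks l (\<not> b)) (cs ! t')"
proof -
  obtain j k j' k' where factors: "is_factor l j k" "is_factor l j' k'"
    and "block l j k b \<noteq> block l j' k' b"
    and full: "block l j k b \<subseteq> set (fst (cs ! t))" "block l j' k' b \<subseteq> set (fst (cs ! t))"
    using assms(3) unfolding two_full_def blocks_def by blast
  then have "factor_rank l j k \<noteq> factor_rank l j' k'"
    using factor_rank_inj by metis
  then consider "factor_rank l j k < factor_rank l j' k'"
    | "factor_rank l j' k' < factor_rank l j k"
    by linarith
  then show ?thesis
  proof cases
    case 1
    from two_full_ordered_blocks_imp_two_full_other[OF assms(1,2) factors 1 full] show ?thesis .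
  next
    case 2
    from two_full_ordered_blocks_imp_two_full_other[OF assms(1,2) factors(2,1) 2 full(2,1)]
    show ?thesis .
  qed
qed

theorem lemma12:
  fixes l :: nat and cs :: "config list" and t :: nat
  assumes "l \<ge> 1"
    and "accepting (Vword l) cs"
    and "t < length cs"
  shows "(two_full (xblocks l) (cs ! t) \<longrightarrow>
            (\<exists>t'. t < t' \<and> t' < length cs \<and> two_full (yblocks l) (cs ! t'))) \<and>
         (two_full (yblocks l) (cs ! t) \<longrightarrow>
            (\<exists>t'. t < t' \<and> t' < length cs \<and> two_full (xblocks l) (cs ! t')))"
  using two_full_blocks_imp_two_full_other[OF assms(2,3), of False]
    two_full_blocks_imp_two_full_other[OF assms(2,3), of True]
  unfolding xblocks_eq_blocks yblocks_eq_blocks by simp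

end
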